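(* Let $B$ be any group and $p\ge 2$ an integer, and let $\sigma=(1,2,\dots,p)$. Let $r_1,\dots,r_{p-1},f,g\in B$ and let $$w=(r_1,r_2,\dots,r_{p-1},\ r_1^{-1}\cdots r_{p-1}^{-1}[f,g])\in B\wr C_p.$$ Define elements of $B$ by $a_{1,i}=e$ for $1\le i\le p-1$, $a_{2,1}=(f^{-1})^{r_1^{-1}\cdots r_{p-1}^{-1}}$, $a_{2,i}=r_{i-1}a_{2,i-1}$ for $2\le i\le p$, and $a_{1,p}=g^{a_{2,p}^{-1}}$. Then $$w=\big[(a_{1,1},\dots,a_{1,p})\sigma,\ (a_{2,1},\dots,a_{2,p})\big].$$
   Context: $B\wr C_p=B^p\rtimes C_p$ with $C_p=\langle\sigma\rangle$ acting on $\{1,\dots,p\}$; elements are written $(g_1,\dots,g_p)\pi$ with multiplication $(g_1,\dots,g_p)\pi\cdot(h_1,\dots,h_p)\tau=(g_1h_{\pi(1)},\dots,g_ph_{\pi(p)})\pi\tau$. Conventions: $[a,b]=aba^{-1}b^{-1}$ and $a^b=bab^{-1}$. *)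

theory Defs
  imports "HOL-Algebra.Group"
begin

definition gcomm :: "('a, 'b) monoid_scheme \<Rightarrow> 'a \<Rightarrow> 'a \<Rightarrow> 'a" where
  "gcomm G a b = a \<otimes>\<^bsub>G\<^esub> b \<otimes>\<^bsub>G\<^esub> inv\<^bsub>G\<^esub> a \<otimes>\<^bsub>G\<^esub> inv\<^bsub>G\<^esub> b"

definition gconj :: "('a, 'b) monoid_scheme \<Rightarrow> 'a \<Rightarrow> 'a \<Rightarrow> 'a" where
  "gconj G a b = b \<otimes>\<^bsub>G\<^esub> a \<otimes>\<^bsub>G\<^esub> inv\<^bsub>G\<^esub> b"

definition cyc :: "nat \<Rightarrow> nat \<Rightarrow> nat" where
  "cyc p i = (if 1 \<le> i \<and> i < p then i + 1 else if i = p then 1 else i)"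

text \<open>Elements of the wreath product B wr C_p are pairs (g, pi): g : nat => B is the
  base tuple (g_1,...,g_p), normalized to the identity outside {1..p}, and pi is a
  permutation of nat fixing everything outside {1..p}.\<close>
definition wr_mult :: "('a, 'b) monoid_scheme \<Rightarrow> nat \<Rightarrow> (nat \<Rightarrow> 'a) \<times> (nat \<Rightarrow> nat)
    \<Rightarrow> (nat \<Rightarrow> 'a) \<times> (nat \<Rightarrow> nat) \<Rightarrow> (nat \<Rightarrow> 'a) \<times> (nat \<Rightarrow> nat)" where
  "wr_mult G p x y =
     ((\<lambda>i. if i \<in> {1..p} then fst x i \<otimes>\<^bsub>G\<^esub> fst y (snd x i) else \<one>\<^bsub>G\<^esub>), snd x \<circ> snd y)"

definition wr_inv :: "('a, 'b) monoid_scheme \<Rightarrow> nat \<Rightarrow> (nat \<Rightarrow> 'a) \<times> (nat \<Rightarrow> nat)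
    \<Rightarrow> (nat \<Rightarrow> 'a) \<times> (nat \<Rightarrow> nat)" where
  "wr_inv G p x =
     ((\<lambda>i. if i \<in> {1..p} then inv\<^bsub>G\<^esub> (fst x (inv_into UNIV (snd x) i)) else \<one>\<^bsub>G\<^esub>), inv_into UNIV (snd x))"

definition wr_comm :: "('a, 'b) monoid_scheme \<Rightarrow> nat \<Rightarrow> (nat \<Rightarrow> 'a) \<times> (nat \<Rightarrow> nat)
    \<Rightarrow> (nat \<Rightarrow> 'a) \<times> (nat \<Rightarrow> nat) \<Rightarrow> (nat \<Rightarrow> 'a) \<times> (nat \<Rightarrow> nat)" where
  "wr_comm G p x y = wr_mult G p (wr_mult G p x y) (wr_mult G p (wr_inv G p x) (wr_inv G p y))"

end

theory Submission
  imports Defs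
begin

(*
  If x = (a)pi and y = (b) lies in the base group, then [x, y] = (c) with
  c_i = a_i b_pi(i) a_i^-1 b_i^-1.  For x = (a_1)sigma and y = (a_2) the coordinates
  i < p are therefore a_2,i+1 a_2,i^-1 = r_i.  Unwinding the recurrence gives
  a_2,p = R^-1 a_2,1 = f^-1 R^-1 with R = r_1^-1 ... r_(p-1)^-1, so a_1,p is g
  conjugated by R f, and the p-th coordinate collapses to R [f, g].
*)

lemma (in group) wr_comm_with_base:
  assumes "bij \<pi>" and "\<pi> ` {1..p} \<subseteq> {1..p}"
    and "range a \<subseteq> carrier G" and "range b \<subseteq> carrier G"
  shows "wr_comm G p (a, \<pi>) (b, id)
       = ((\<lambda>i. if i \<in> {1..p} then a i \<otimes> b (\<pi> i) \<otimes> inv (a i) \<otimes> inv (b i) else \<one>), id)"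
proof -
  have inv_\<pi>: "inv_into UNIV \<pi> (\<pi> i) = i" and \<pi>_inv: "\<pi> (inv_into UNIV \<pi> i) = i" for i
    using assms(1) by (simp_all add: bij_is_inj bij_is_surj surj_f_inv_f)
  have [simp]: "a i \<in> carrier G" "b i \<in> carrier G" for i
    using assms(3,4) by auto
  have "1 \<le> \<pi> i" "\<pi> i \<le> p" if "1 \<le> i" "i \<le> p" for i
    using assms(2) that by (simp_all add: image_subset_iff)
  then show ?thesis
    by (auto simp: wr_comm_def wr_mult_def wr_inv_def inv_\<pi> \<pi>_inv m_assoc fun_eq_iff)
qed

lemma bij_cyc:
  assumes "1 \<le> p"
  shows "bij (cyc p)"
proof (rule bijI)
  show "inj (cyc p)"
    using assms by (auto simp: inj_def cyc_def)
  have "cyc p (if 2 \<le> j \<and> j \<le> p then j - 1 else if j = 1 then p else j) = j" for j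
    using assms by (auto simp: cyc_def)
  then show "surj (cyc p)"
    by (rule surjI)
qed

lemma cyc_image: "cyc p ` {1..p} \<subseteq> {1..p}"
  by (auto simp: cyc_def)

lemma (in group) wr_comm_cyc_with_base:
  assumes "1 \<le> p" and c: "c \<in> carrier G" and b: "\<forall>i\<in>{1..p}. b i \<in> carrier G"
  shows "wr_comm G p ((\<lambda>i. if i = p then c else \<one>), cyc p) ((\<lambda>i. if i \<in> {1..p} then b i else \<one>), id)
       = ((\<lambda>i. if 1 \<le> i \<and> i < p then b (Suc i) \<otimes> inv (b i)
               else if i = p then c \<otimes> b 1 \<otimes> inv c \<otimes> inv (b p)
               else \<one>), id)"
proof -
  have "cyc p i = (if i = p then 1 else Suc i)" if "1 \<le> i" "i \<le> p" for i
    using that by (auto simp: cyc_def)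
  moreover have "wr_comm G p ((\<lambda>i. if i = p then c else \<one>), cyc p)
                              ((\<lambda>i. if i \<in> {1..p} then b i else \<one>), id)
      = ((\<lambda>i. if i \<in> {1..p}
               then (if i = p then c else \<one>) \<otimes> (if cyc p i \<in> {1..p} then b (cyc p i) else \<one>)
                    \<otimes> inv (if i = p then c else \<one>) \<otimes> inv (if i \<in> {1..p} then b i else \<one>)
               else \<one>), id)"
    using assms b by (intro wr_comm_with_base bij_cyc cyc_image) auto
  ultimately show ?thesis
    using assms b by (auto simp: fun_eq_iff)
qed

definition inv_prefix_prod :: "('a, 'b) monoid_scheme \<Rightarrow> (nat \<Rightarrow> 'a) \<Rightarrow> nat \<Rightarrow> 'a" where
  "inv_prefix_prod G r k = foldr (\<lambda>i acc. inv\<^bsub>G\<^esub> (r i) \<otimes>\<^bsub>G\<^esub> acc) [1..<k] \<one>\<^bsub>G\<^esub>"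

lemma (in monoid) foldr_mult_closed:
  "\<forall>i\<in>set xs. h i \<in> carrier G \<Longrightarrow> foldr (\<lambda>i acc. h i \<otimes> acc) xs \<one> \<in> carrier G"
  by (induction xs) auto

lemma (in monoid) foldr_mult_acc:
  assumes "\<forall>i\<in>set xs. h i \<in> carrier G" and "z \<in> carrier G"
  shows "foldr (\<lambda>i acc. h i \<otimes> acc) xs z = foldr (\<lambda>i acc. h i \<otimes> acc) xs \<one> \<otimes> z"
  using assms by (induction xs) (auto simp: m_assoc foldr_mult_closed)

lemma (in group) inv_prefix_prod_closed:
  "\<forall>i\<in>{1..<k}. r i \<in> carrier G \<Longrightarrow> inv_prefix_prod G r k \<in> carrier G"
  unfolding inv_prefix_prod_def by (rule foldr_mult_closed) auto

lemma (in group) inv_prefix_prod_Suc: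
  assumes "1 \<le> k" and "\<forall>i\<in>{1..k}. r i \<in> carrier G"
  shows "inv_prefix_prod G r (Suc k) = inv_prefix_prod G r k \<otimes> inv (r k)"
proof -
  have "inv_prefix_prod G r (Suc k) = foldr (\<lambda>i acc. inv (r i) \<otimes> acc) [1..<k] (inv (r k))"
    using assms by (simp add: inv_prefix_prod_def)
  also have "\<dots> = inv_prefix_prod G r k \<otimes> inv (r k)"
    unfolding inv_prefix_prod_def using assms by (intro foldr_mult_acc) auto
  finally show ?thesis .
qed

lemma (in group) recurrence_eq_inv_prefix_prod:
  assumes r: "\<forall>i\<in>{1..<p}. r i \<in> carrier G" and a: "a 1 \<in> carrier G"
    and step: "\<forall>i\<in>{2..p}. a i = r (i - 1) \<otimes> a (i - 1)"
    and k: "1 \<le> k" "k \<le> p"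
  shows "a k = inv (inv_prefix_prod G r k) \<otimes> a 1"
  using k
proof (induction k rule: nat_induct_at_least)
  case base
  then show ?case
    using a by (simp add: inv_prefix_prod_def)
next
  case (Suc k)
  have rk: "r k \<in> carrier G" and R: "inv_prefix_prod G r k \<in> carrier G"
    using r Suc by (auto intro: inv_prefix_prod_closed)
  have "a (Suc k) = r k \<otimes> a k"
    using bspec[OF step, of "Suc k"] Suc by simp
  also have "\<dots> = inv (inv_prefix_prod G r k \<otimes> inv (r k)) \<otimes> a 1"
    using Suc.IH Suc.prems rk R a by (simp add: inv_mult_group m_assoc)
  also have "\<dots> = inv (inv_prefix_prod G r (Suc k)) \<otimes> a 1"
    using Suc r by (simp add: inv_prefix_prod_Suc)
  finally show ?case .
qed

lemma (in group) gconj_gcomm_identity: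
  assumes R: "R \<in> carrier G" and f: "f \<in> carrier G" and g: "g \<in> carrier G"
    and c: "c = gconj G (inv f) R" and d: "d = inv R \<otimes> c"
  shows "gconj G g (inv d) \<otimes> c \<otimes> inv (gconj G g (inv d)) \<otimes> inv d = R \<otimes> gcomm G f g"
proof -
  have cancel: "x \<otimes> (inv x \<otimes> y) = y" "inv x \<otimes> (x \<otimes> y) = y"
    if "x \<in> carrier G" "y \<in> carrier G" for x y
    using that by (simp_all add: m_assoc[symmetric])
  have inv_d: "inv d = R \<otimes> f"
    using R f by (simp add: c d gconj_def m_assoc inv_mult_group cancel)
  then have conj_g: "gconj G g (inv d) = (R \<otimes> f) \<otimes> g \<otimes> inv (R \<otimes> f)"
    by (simp add: gconj_def)
  show ?thesis
    using R f g
    by (simp add: conj_g inv_d c gconj_def gcomm_def m_assoc inv_mult_group cancel)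
qed

theorem lemma3:
  fixes G :: "('a, 'b) monoid_scheme" and p :: nat
    and r :: "nat \<Rightarrow> 'a" and f g :: 'a and a2 :: "nat \<Rightarrow> 'a"
  assumes "group G" and "p \<ge> 2"
    and "\<forall>i\<in>{1..p-1}. r i \<in> carrier G" and "f \<in> carrier G" and "g \<in> carrier G"
    and "a2 1 = gconj G (inv\<^bsub>G\<^esub> f) (foldr (\<lambda>i acc. inv\<^bsub>G\<^esub> (r i) \<otimes>\<^bsub>G\<^esub> acc) [1..<p] \<one>\<^bsub>G\<^esub>)"
    and "\<forall>i\<in>{2..p}. a2 i = r (i - 1) \<otimes>\<^bsub>G\<^esub> a2 (i - 1)"
  shows "((\<lambda>i. if 1 \<le> i \<and> i < p then r i
               else if i = p then foldr (\<lambda>i acc. inv\<^bsub>G\<^esub> (r i) \<otimes>\<^bsub>G\<^esub> acc) [1..<p] \<one>\<^bsub>G\<^esub>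
                                  \<otimes>\<^bsub>G\<^esub> gcomm G f g
               else \<one>\<^bsub>G\<^esub>), id)
       = wr_comm G p
           ((\<lambda>i. if i = p then gconj G g (inv\<^bsub>G\<^esub> (a2 p)) else \<one>\<^bsub>G\<^esub>), cyc p)
           ((\<lambda>i. if i \<in> {1..p} then a2 i else \<one>\<^bsub>G\<^esub>), id)"
proof -
  interpret group G by fact
  let ?R = "inv_prefix_prod G r p"
  have r: "\<forall>i\<in>{1..<p}. r i \<in> carrier G"
    using assms(3) by auto
  have R: "?R \<in> carrier G"
    using r by (rule inv_prefix_prod_closed)
  have a1: "a2 1 = gconj G (inv\<^bsub>G\<^esub> f) ?R"
    using assms(6) by (simp add: inv_prefix_prod_def)
  have a1_closed: "a2 1 \<in> carrier G"
    using a1 R assms(4) by (simp add: gconj_def)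
  have a2_eq: "a2 k = inv\<^bsub>G\<^esub> (inv_prefix_prod G r k) \<otimes>\<^bsub>G\<^esub> a2 1" if "1 \<le> k" "k \<le> p" for k
    using r a1_closed assms(7) that by (rule recurrence_eq_inv_prefix_prod)
  have a2_closed: "a2 k \<in> carrier G" if "1 \<le> k" "k \<le> p" for k
    using a2_eq[OF that] a1_closed inv_prefix_prod_closed[of k r] r that by auto
  have entry_lt_p: "a2 (Suc i) \<otimes>\<^bsub>G\<^esub> inv\<^bsub>G\<^esub> (a2 i) = r i" if "1 \<le> i" "i < p" for i
    using bspec[OF assms(7), of "Suc i"] that r a2_closed[of i] by (simp add: m_assoc)
  have entry_p: "gconj G g (inv\<^bsub>G\<^esub> (a2 p)) \<otimes>\<^bsub>G\<^esub> a2 1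
      \<otimes>\<^bsub>G\<^esub> inv\<^bsub>G\<^esub> (gconj G g (inv\<^bsub>G\<^esub> (a2 p))) \<otimes>\<^bsub>G\<^esub> inv\<^bsub>G\<^esub> (a2 p)
      = ?R \<otimes>\<^bsub>G\<^esub> gcomm G f g"
    using R assms(4,5) a1 a2_eq[of p] assms(2) by (intro gconj_gcomm_identity) auto
  show ?thesis
    unfolding inv_prefix_prod_def[symmetric]
    using assms(2,5) a2_closed entry_lt_p entry_p
    by (subst wr_comm_cyc_with_base) (auto simp: gconj_def fun_eq_iff)
qed

end
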